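(* The sequence $\{k^2+k+1\}_{k=0}^{\infty}$ is a Legendre multiplier sequence.
   Context: The Legendre polynomials $\mathfrak{Le}_n(x)$ are defined by $\frac{1}{\sqrt{1-2xt+t^2}}=\sum_{k=0}^{\infty}\mathfrak{Le}_k(x)t^k$. A real sequence $\{\gamma_k\}_{k=0}^{\infty}$ is a Legendre multiplier sequence if, for every $n$ and all real $a_0,\dots,a_n$, the polynomial $\sum_{k=0}^n a_k\gamma_k\mathfrak{Le}_k(x)$ has only real zeros whenever $\sum_{k=0}^n a_k\mathfrak{Le}_k(x)$ has only real zeros. *)

theory Defs
  imports "HOL-Analysis.Analysis"
begin

text \<open>Legendre polynomials via their generating function
  1/sqrt(1 - 2 x t + t^2) = sum_k Le_k(x) t^k: Le_k(z) is the k-th Taylor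
  coefficient at t = 0 (principal square root, equal to 1 at t = 0).
  They are evaluated at complex arguments so that we can speak about all
  (complex) zeros of the polynomial combinations.\<close>

definition legendre :: "nat \<Rightarrow> complex \<Rightarrow> complex" where
  "legendre k z = (deriv ^^ k) (\<lambda>t. 1 / csqrt (1 - 2 * z * t + t ^ 2)) 0 / fact k"

definition only_real_zeros :: "(complex \<Rightarrow> complex) \<Rightarrow> bool" where
  "only_real_zeros p \<longleftrightarrow> (\<forall>z. p z = 0 \<longrightarrow> z \<in> \<real>)"

definition legendre_multiplier_seq :: "(nat \<Rightarrow> real) \<Rightarrow> bool" where
  "legendre_multiplier_seq \<gamma> \<longleftrightarrow>
     (\<forall>(n::nat) (a::nat \<Rightarrow> real).
        only_real_zeros (\<lambda>z. \<Sum>k\<le>n. complex_of_real (a k) * legendre k z) \<longrightarrow>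
        only_real_zeros (\<lambda>z. \<Sum>k\<le>n. complex_of_real (a k * \<gamma> k) * legendre k z))"

end

theory Submission
  imports Defs "HOL-Complex_Analysis.Cauchy_Integral_Formula"
    "HOL-Computational_Algebra.Fundamental_Theorem_Algebra"
begin

text \<open>Legendre's equation makes \<open>P\<^sub>k\<close> an eigenfunction of \<open>p \<mapsto> ((x\<^sup>2 - 1) p')'\<close> with
  eigenvalue \<open>k (k + 1)\<close>, so the multiplier \<open>k\<^sup>2 + k + 1\<close> acts on \<open>p = \<Sum> a\<^sub>k P\<^sub>k\<close> as
  \<open>p \<mapsto> p + 2 x p' + (x\<^sup>2 - 1) p''\<close>. (The generating-function coefficients are identified
  with the polynomials of Bonnet's recurrence through the ODE \<open>(1 - 2 z t + t\<^sup>2) G' = (z - t) G\<close>.)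

  At a point \<open>w\<close> with \<open>Im w > 0\<close> this equals \<open>(a + b D + c D\<^sup>2) p\<close> at \<open>w\<close> for the frozen
  constants \<open>a = 1, b = 2 w, c = w\<^sup>2 - 1\<close>, whose symbol \<open>Q(t) = a + b t + c t\<^sup>2\<close> has no
  zeros in the closed lower half-plane. Splitting off a real zero \<open>r\<close> of \<open>p = (x - r) s\<close>
  turns the operator applied to \<open>p\<close> into \<open>w - r\<close> times an operator applied to \<open>s\<close> whose
  symbol is \<open>Q + v Q'\<close> with \<open>v = 1 / (w - r)\<close> in the lower half-plane; as \<open>Im (Q'/Q) \<ge> 0\<close>
  there, \<open>Q + v Q'\<close> is again zero-free. Induction on the degree ends with a nonzero constant
  times \<open>Q(0) \<noteq> 0\<close>. Zeros in the lower half-plane are excluded by conjugation.\<close>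

lemma of_nat_add_numeral_neq_0 [simp]: "of_nat n + numeral k \<noteq> (0 :: 'a::semiring_char_0)"
  by (metis of_nat_numeral of_nat_add of_nat_eq_0_iff add_is_0 zero_neq_numeral)

fun legendre_poly :: "nat \<Rightarrow> 'a::field_char_0 poly" where
  "legendre_poly 0 = 1"
| "legendre_poly (Suc 0) = [:0, 1:]"
| "legendre_poly (Suc (Suc n)) =
     smult (1 / (of_nat n + 2))
       (smult (2 * of_nat n + 3) ([:0, 1:] * legendre_poly (Suc n)) - smult (of_nat n + 1) (legendre_poly n))"

lemma legendre_poly_recurrence:
  "(of_nat n + 2) * legendre_poly (Suc (Suc n)) =
     (2 * of_nat n + 3) * [:0, 1:] * legendre_poly (Suc n) - (of_nat n + 1) * (legendre_poly n :: 'a::field_char_0 poly)"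
  by (simp add: of_nat_poly numeral_poly one_pCons smult_diff_right mult.assoc mult.commute)

definition legendre_op :: "'a::idom poly \<Rightarrow> 'a poly" where
  "legendre_op p = pderiv ([:-1, 0, 1:] * pderiv p)"

lemma legendre_poly_pderiv_identities:
  fixes X :: "'a::field_char_0 poly"
  defines "X \<equiv> [:0, 1:]"
  shows "X * pderiv (legendre_poly (Suc n)) - pderiv (legendre_poly n) = (of_nat n + 1) * legendre_poly (Suc n)
    \<and> (X * X - 1) * pderiv (legendre_poly (Suc n)) = (of_nat n + 1) * (X * legendre_poly (Suc n) - legendre_poly n)"
proof (induction n)
  case 0
  show ?case by (simp add: X_def pderiv_pCons one_pCons)
next
  case (Suc n)
  define N :: "'a poly" where "N = of_nat n"
  define A where "A = (legendre_poly n :: 'a poly)"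
  define B where "B = (legendre_poly (Suc n) :: 'a poly)"
  define C where "C = (legendre_poly (Suc (Suc n)) :: 'a poly)"
  have pX: "pderiv X = 1" and pN: "pderiv N = 0" and pN2: "pderiv (N + 2) = 0"
    by (simp_all add: X_def N_def pderiv_pCons pderiv_add)
  have IH1: "X * pderiv B - pderiv A = (N + 1) * B"
    and IH2: "(X * X - 1) * pderiv B = (N + 1) * (X * B - A)"
    using Suc unfolding N_def A_def B_def by auto
  have rec: "(N + 2) * C = (2 * N + 3) * X * B - (N + 1) * A"
    using legendre_poly_recurrence[of n] unfolding X_def N_def A_def B_def C_def .
  have "(N + 2) * pderiv C = pderiv ((N + 2) * C)"
    by (simp add: pderiv_mult pN2)
  also have "\<dots> = (2 * N + 3) * B + (2 * N + 3) * X * pderiv B - (N + 1) * pderiv A"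
    unfolding rec by (simp add: pderiv_mult pderiv_diff pderiv_add pN pX algebra_simps)
  also have "\<dots> = (N + 2) * (X * pderiv B + (N + 2) * B)"
    using IH1 by algebra
  finally have "pderiv C = X * pderiv B + (N + 2) * B"
    by (simp add: N_def)
  then have "X * pderiv C - pderiv B = (N + 2) * C"
    and "(X * X - 1) * pderiv C = (N + 2) * (X * C - B)"
    using IH2 rec by algebra+
  then show ?case
    by (simp add: N_def B_def C_def algebra_simps)
qed

lemma legendre_op_legendre_poly:
  "legendre_op (legendre_poly n) = of_nat n * (of_nat n + 1) * (legendre_poly n :: 'a::field_char_0 poly)"
proof (cases n)
  case (Suc m)
  define X :: "'a poly" where "X = [:0, 1:]"
  define N :: "'a poly" where "N = of_nat m"
  have pX: "pderiv X = 1" and pN: "pderiv N = 0"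
    by (simp_all add: X_def N_def pderiv_pCons)
  have sq: "[:-1, 0, 1:] = X * X - 1"
    by (simp add: X_def one_pCons)
  have ident1: "X * pderiv (legendre_poly (Suc m)) - pderiv (legendre_poly m) = (N + 1) * legendre_poly (Suc m)"
    and ident2: "(X * X - 1) * pderiv (legendre_poly (Suc m)) = (N + 1) * (X * legendre_poly (Suc m) - legendre_poly m)"
    using legendre_poly_pderiv_identities[of m] unfolding X_def N_def by auto
  have "legendre_op (legendre_poly (Suc m)) = pderiv ((N + 1) * (X * legendre_poly (Suc m) - legendre_poly m))"
    unfolding legendre_op_def sq ident2 ..
  also have "\<dots> = (N + 1) * (legendre_poly (Suc m) + X * pderiv (legendre_poly (Suc m)) - pderiv (legendre_poly m))"
    by (simp add: pderiv_mult pderiv_diff pderiv_add pN pX algebra_simps)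
  also have "\<dots> = (N + 1) * (N + 2) * legendre_poly (Suc m)"
    using ident1 by algebra
  finally show ?thesis
    by (simp add: Suc N_def algebra_simps)
qed (simp add: legendre_op_def)

lemma pderiv_sum: "pderiv (sum f A) = (\<Sum>x\<in>A. pderiv (f x))"
  using higher_pderiv_sum[of 1] by simp

lemma legendre_op_smult: "legendre_op (smult c p) = smult c (legendre_op p)"
  by (simp add: legendre_op_def pderiv_smult)

lemma legendre_op_sum: "legendre_op (sum f A) = (\<Sum>x\<in>A. legendre_op (f x))"
  by (simp add: legendre_op_def pderiv_sum sum_distrib_left)

lemma legendre_op_legendre_expansion:
  "legendre_op (\<Sum>k\<in>K. smult (c k) (legendre_poly k)) =
     (\<Sum>k\<in>K. smult (c k * (of_nat k * (of_nat k + 1))) (legendre_poly k :: 'a::field_char_0 poly))"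
proof -
  have "of_nat k * (of_nat k + 1) * p = smult (of_nat k * (of_nat k + 1)) p" for k and p :: "'a poly"
    by (simp add: of_nat_poly algebra_simps flip: smult_smult)
  then show ?thesis
    by (simp add: legendre_op_sum legendre_op_smult legendre_op_legendre_poly)
qed

lemma higher_deriv_mult_id:
  fixes f :: "complex \<Rightarrow> complex"
  assumes "f holomorphic_on S" "open S" "x \<in> S"
  shows "(deriv ^^ n) (\<lambda>w. w * f w) x = x * (deriv ^^ n) f x + of_nat n * (deriv ^^ (n - 1)) f x"
proof -
  have "(deriv ^^ n) (\<lambda>w. w * f w) x =
      (\<Sum>i = 0..n. of_nat (n choose i) * (deriv ^^ i) (\<lambda>w. w) x * (deriv ^^ (n - i)) f x)"
    by (rule higher_deriv_mult[OF _ assms]) simp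
  also have "\<dots> = (\<Sum>i = 0..n. (if i = 0 then x * (deriv ^^ n) f x else 0)
                    + (if i = 1 then of_nat n * (deriv ^^ (n - 1)) f x else 0))"
    by (intro sum.cong refl) auto
  also have "\<dots> = x * (deriv ^^ n) f x + of_nat n * (deriv ^^ (n - 1)) f x"
    by (cases n) (auto simp: sum.distrib)
  finally show ?thesis .
qed

lemma higher_deriv_recurrence_legendre_ode:
  fixes f :: "complex \<Rightarrow> complex"
  assumes holo: "f holomorphic_on S" and S: "open S" "0 \<in> S"
    and ode: "\<And>t. t \<in> S \<Longrightarrow> (1 - 2 * z * t + t ^ 2) * deriv f t = (z - t) * f t"
  shows "(deriv ^^ Suc (Suc n)) f 0 =
           (2 * of_nat n + 3) * z * (deriv ^^ Suc n) f 0 - (of_nat n + 1) ^ 2 * (deriv ^^ n) f 0"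
proof -
  let ?d = "\<lambda>m g. (deriv ^^ m) g (0 :: complex)"
  define F where "F = deriv f"
  have hF: "F holomorphic_on S"
    unfolding F_def using holo S(1) by (rule holomorphic_deriv)
  have F_shift: "?d m F = ?d (Suc m) f" for m
    unfolding F_def by (simp add: funpow_Suc_right del: funpow.simps)
  have tF: "?d m (\<lambda>t. t * F t) = of_nat m * ?d (m - 1) F" for m
    using higher_deriv_mult_id[OF hF S] by simp
  have ttF: "?d m (\<lambda>t. t * (t * F t)) = of_nat m * (of_nat (m - 1) * ?d (m - 2) F)" for m
    using higher_deriv_mult_id[OF _ S, of "\<lambda>t. t * F t" m] hF tF[of "m - 1"]
    by (simp add: holomorphic_intros diff_diff_add numeral_2_eq_2)
  have tf: "?d m (\<lambda>t. t * f t) = of_nat m * ?d (m - 1) f" for m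
    using higher_deriv_mult_id[OF holo S] by simp
  have "?d m (\<lambda>t. F t - 2 * z * (t * F t) + t * (t * F t)) = ?d m (\<lambda>t. z * f t - t * f t)" for m
    by (rule higher_deriv_transform_within_open[OF _ _ S])
       (use ode S in \<open>auto intro!: holomorphic_intros hF holo simp: F_def algebra_simps power2_eq_square\<close>)
  moreover have hs: "(\<lambda>t. t * F t) holomorphic_on S" "(\<lambda>t. t * (t * F t)) holomorphic_on S"
    "(\<lambda>t. 2 * z * (t * F t)) holomorphic_on S" "(\<lambda>t. F t - 2 * z * (t * F t)) holomorphic_on S"
    "(\<lambda>t. z * f t) holomorphic_on S" "(\<lambda>t. t * f t) holomorphic_on S"
    using hF holo by (auto intro!: holomorphic_intros)
  ultimately have key: "?d m F - 2 * z * ?d m (\<lambda>t. t * F t) + ?d m (\<lambda>t. t * (t * F t))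
                     = z * ?d m f - ?d m (\<lambda>t. t * f t)" for m
    using higher_deriv_add[OF hs(4,2) S] higher_deriv_diff[OF hF hs(3) S] higher_deriv_diff[OF hs(5,6) S]
      higher_deriv_cmult[OF holo S(2,1)]
    by (simp add: higher_deriv_cmult[OF hs(1) S(2,1)])
  have shift: "of_nat n * ?d (n - Suc 0) F = of_nat n * ?d n f"
    by (cases n) (simp_all add: F_shift)
  have "?d (Suc (Suc n)) f - 2 * z * (of_nat (Suc n) * ?d (Suc n) f) + of_nat (Suc n) * (of_nat n * ?d n f)
          = z * ?d (Suc n) f - of_nat (Suc n) * ?d n f"
    using key[of "Suc n"] unfolding tF ttF tf numeral_2_eq_2 diff_Suc_Suc diff_Suc_1
    unfolding shift unfolding F_shift .
  then show ?thesis
    by (simp add: algebra_simps power2_eq_square)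
qed

lemma legendre_gen_fun_has_field_derivative:
  fixes z :: complex
  defines "u \<equiv> \<lambda>t. 1 - 2 * z * t + t ^ 2"
  assumes "0 < Re (u t)"
  shows "((\<lambda>t. 1 / csqrt (u t)) has_field_derivative (z - t) / u t * (1 / csqrt (u t))) (at t)"
proof -
  have nonpos: "u t \<notin> \<real>\<^sub>\<le>\<^sub>0" and u0: "u t \<noteq> 0" and cs0: "csqrt (u t) \<noteq> 0"
    using assms(2) by (auto simp: complex_nonpos_Reals_iff)
  have "((\<lambda>t. 1 / csqrt (u t)) has_field_derivative
          - ((2 * t - 2 * z) / (2 * csqrt (u t))) / (csqrt (u t))\<^sup>2) (at t)"
    using nonpos cs0 unfolding u_def
    by (auto intro!: derivative_eq_intros simp: power2_eq_square field_simps)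
  moreover have "- ((2 * t - 2 * z) / (2 * csqrt (u t))) / (csqrt (u t))\<^sup>2 = (z - t) / u t * (1 / csqrt (u t))"
    using cs0 u0 by (simp add: field_simps)
  ultimately show ?thesis
    by simp
qed

lemma legendre_eq_poly_legendre_poly: "legendre k z = poly (legendre_poly k) z"
proof -
  define u where "u t = 1 - 2 * z * t + t ^ 2" for t
  define G where "G t = 1 / csqrt (u t)" for t
  define S where "S = {t. 0 < Re (u t)}" \<comment> \<open>keeps \<open>u t\<close> off the branch cut of \<open>csqrt\<close>\<close>
  have S: "open S" "0 \<in> S"
    unfolding S_def u_def by (auto intro!: open_Collect_less continuous_intros)
  have G_deriv: "(G has_field_derivative (z - t) / u t * G t) (at t)" if "t \<in> S" for t
    using legendre_gen_fun_has_field_derivative[of z t] that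
    unfolding S_def G_def[abs_def] u_def by simp
  have holo: "G holomorphic_on S"
    using G_deriv S(1) holomorphic_on_open by blast
  have ode: "u t * deriv G t = (z - t) * G t" if "t \<in> S" for t
    using DERIV_imp_deriv[OF G_deriv[OF that]] that by (auto simp: S_def)
  have G0: "G 0 = 1" and G'0: "deriv G 0 = z"
    using ode[OF S(2)] by (simp_all add: G_def u_def)
  have coeff: "legendre k z = (deriv ^^ k) G 0 / fact k" for k
    unfolding legendre_def G_def u_def ..
  have higher_deriv_G: "(deriv ^^ k) G 0 = fact k * legendre k z" for k
    by (simp add: coeff)
  show ?thesis
  proof (induction k rule: legendre_poly.induct)
    case (3 n)
    let ?P = "\<lambda>k. poly (legendre_poly k) z"
    have "(of_nat n + 2) * ?P (Suc (Suc n)) = (2 * of_nat n + 3) * z * ?P (Suc n) - (of_nat n + 1) * ?P n"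
      using arg_cong[where f="\<lambda>p. poly p z", OF legendre_poly_recurrence[of n]]
      by (simp add: algebra_simps del: legendre_poly.simps)
    then have "fact (Suc (Suc n)) * ?P (Suc (Suc n)) =
        (2 * of_nat n + 3) * z * (fact (Suc n) * ?P (Suc n)) - (of_nat n + 1) ^ 2 * (fact n * ?P n)"
      unfolding fact_Suc of_nat_Suc by algebra
    also have "\<dots> = fact (Suc (Suc n)) * legendre (Suc (Suc n)) z"
      using higher_deriv_recurrence_legendre_ode[OF holo S ode[unfolded u_def], of n, unfolded higher_deriv_G] 3
      by (simp del: legendre_poly.simps)
    finally show ?case
      unfolding mult_left_cancel[OF fact_nonzero] by (rule sym)
  qed (simp_all add: coeff G0 G'0)
qed

lemma Im_one_div_pos_iff: "0 < Im (1 / w) \<longleftrightarrow> Im w < 0"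
proof -
  have "Im (1 / w) = - Im w / ((Re w)\<^sup>2 + (Im w)\<^sup>2)"
    by (simp add: Im_divide)
  moreover have "Im w \<noteq> 0 \<Longrightarrow> 0 < (Re w)\<^sup>2 + (Im w)\<^sup>2"
    by (simp add: sum_power2_gt_zero_iff)
  ultimately show ?thesis
    by (cases "Im w = 0") (auto simp: zero_less_divide_iff divide_less_0_iff)
qed

lemma Im_one_div_neg_iff: "Im (1 / w) < 0 \<longleftrightarrow> 0 < Im w"
  using Im_one_div_pos_iff[of "-w"] by simp

definition quadratic_zero_free_below :: "complex \<Rightarrow> complex \<Rightarrow> complex \<Rightarrow> bool" where
  "quadratic_zero_free_below a b c \<longleftrightarrow> (\<forall>t. Im t \<le> 0 \<longrightarrow> a + b * t + c * t\<^sup>2 \<noteq> 0)"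

lemma quadratic_zero_free_below_logderiv_Im_nonneg:
  assumes zf: "quadratic_zero_free_below a b c" and t: "Im t \<le> 0"
  shows "0 \<le> Im ((b + 2 * c * t) / (a + b * t + c * t\<^sup>2))"
proof (cases "c = 0")
  case c: True
  show ?thesis
  proof (cases "b = 0")
    case False
    have "a + b * (- a / b) + c * (- a / b)\<^sup>2 = 0"
      using False c by simp
    then have "0 < Im (- a / b)"
      using zf unfolding quadratic_zero_free_below_def by (meson not_le)
    moreover have "(b + 2 * c * t) / (a + b * t + c * t\<^sup>2) = 1 / (t - (- a / b))"
      using False c by (simp add: field_simps)
    ultimately show ?thesis
      using t Im_one_div_pos_iff[of "t - (- a / b)"] by simp
  qed (simp add: c)
next
  case False
  define d where "d = csqrt (b\<^sup>2 - 4 * a * c)"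
  define z1 where "z1 = (- b + d) / (2 * c)"
  define z2 where "z2 = - b / c - z1"
  have "4 * c * (a + b * z1 + c * z1\<^sup>2) = 4 * a * c - b\<^sup>2 + d\<^sup>2"
    using False unfolding z1_def by (simp add: field_simps power2_eq_square)
  then have "4 * c * (a + b * z1 + c * z1\<^sup>2) = 0"
    by (simp add: d_def)
  moreover have b: "b = - c * (z1 + z2)"
    using False unfolding z2_def by (simp add: field_simps)
  ultimately have factor: "a + b * s + c * s\<^sup>2 = c * (s - z1) * (s - z2)" for s
    using False by algebra
  have "a + b * z1 + c * z1\<^sup>2 = 0" "a + b * z2 + c * z2\<^sup>2 = 0"
    by (simp_all add: factor)
  then have "0 < Im z1" "0 < Im z2"
    using zf unfolding quadratic_zero_free_below_def by (meson not_le)+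
  then have "t - z1 \<noteq> 0" "t - z2 \<noteq> 0" and pos: "0 < Im (1 / (t - z1))" "0 < Im (1 / (t - z2))"
    using t by (auto simp: Im_one_div_pos_iff)
  moreover have "c * (u1 + u2) / (c * u1 * u2) = 1 / u1 + 1 / u2" if "u1 \<noteq> 0" "u2 \<noteq> 0" for u1 u2
    using False that by (simp add: field_simps)
  moreover have "b + 2 * c * t = c * ((t - z1) + (t - z2))"
    using b by algebra
  ultimately have "(b + 2 * c * t) / (a + b * t + c * t\<^sup>2) = 1 / (t - z1) + 1 / (t - z2)"
    unfolding factor by presburger
  then show ?thesis
    using pos by simp
qed

lemma quadratic_zero_free_below_shift:
  assumes zf: "quadratic_zero_free_below a b c" and w: "Im w < 0"
  shows "quadratic_zero_free_below (a + w * b) (b + 2 * w * c) c"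
  unfolding quadratic_zero_free_below_def
proof (intro allI impI notI)
  fix t assume t: "Im t \<le> 0" and zero: "a + w * b + (b + 2 * w * c) * t + c * t\<^sup>2 = 0"
  have "a + b * t + c * t\<^sup>2 \<noteq> 0" and "w \<noteq> 0"
    using zf t w unfolding quadratic_zero_free_below_def by auto
  then have "(b + 2 * c * t) / (a + b * t + c * t\<^sup>2) = - (1 / w)"
    using zero by (simp add: field_simps) algebra
  moreover have "Im (- (1 / w)) < 0"
    using w Im_one_div_pos_iff[of w] by simp
  ultimately show False
    using quadratic_zero_free_below_logderiv_Im_nonneg[OF zf t] by simp
qed

definition diff_op2 :: "complex \<Rightarrow> complex \<Rightarrow> complex \<Rightarrow> complex poly \<Rightarrow> complex \<Rightarrow> complex" where
  "diff_op2 a b c p z = a * poly p z + b * poly (pderiv p) z + c * poly (pderiv (pderiv p)) z"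

lemma diff_op2_linear_factor:
  assumes "z \<noteq> r"
  defines "w \<equiv> 1 / (z - r)"
  shows "diff_op2 a b c ([:- r, 1:] * s) z = (z - r) * diff_op2 (a + w * b) (b + 2 * w * c) c s z"
proof -
  have linear: "pderiv [:- r, 1:] = 1"
    by (simp add: pderiv_pCons)
  have d1: "pderiv ([:- r, 1:] * s) = s + [:- r, 1:] * pderiv s"
    by (simp only: pderiv_mult linear mult_1_left mult_1_right add.commute)
  have d2: "pderiv (pderiv ([:- r, 1:] * s)) = 2 * pderiv s + [:- r, 1:] * pderiv (pderiv s)"
    unfolding d1 pderiv_add pderiv_mult linear by simp
  have "(z - r) * w = 1"
    using assms by simp
  then show ?thesis
    unfolding diff_op2_def d2 unfolding d1 by (simp add: algebra_simps) algebra
qed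

lemma diff_op2_nonzero:
  fixes p :: "complex poly"
  assumes "p \<noteq> 0" "\<And>x. poly p x = 0 \<Longrightarrow> x \<in> \<real>" "0 < Im z" "quadratic_zero_free_below a b c"
  shows "diff_op2 a b c p z \<noteq> 0"
  using assms
proof (induction "degree p" arbitrary: p a b c rule: less_induct)
  case less
  show ?case
  proof (cases "degree p = 0")
    case True
    then obtain k where "p = [:k:]" "k \<noteq> 0"
      using less.prems(1) by (metis degree_eq_zeroE pCons_0_0)
    moreover have "a \<noteq> 0"
      using less.prems(4)[unfolded quadratic_zero_free_below_def, rule_format, of 0] by simp
    ultimately show ?thesis
      by (simp add: diff_op2_def)
  next
    case False
    then obtain r where "poly p r = 0"
      by (metis fundamental_theorem_of_algebra constant_degree)
    then obtain s where p: "p = [:- r, 1:] * s" and r: "r \<in> \<real>"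
      using less.prems(2) by (metis dvdE poly_eq_0_iff_dvd)
    have "s \<noteq> 0"
      using less.prems(1) p by auto
    then have "degree s < degree p"
      unfolding p by (subst degree_mult_eq) auto
    moreover have "\<And>x. poly s x = 0 \<Longrightarrow> x \<in> \<real>"
      using less.prems(2) p by auto
    moreover have "z \<noteq> r" and "Im (1 / (z - r)) < 0"
      using r less.prems(3) by (auto simp: Im_one_div_neg_iff complex_is_Real_iff)
    ultimately have "diff_op2 (a + 1 / (z - r) * b) (b + 2 * (1 / (z - r)) * c) c s z \<noteq> 0"
      using less.hyps \<open>s \<noteq> 0\<close> less.prems(3) quadratic_zero_free_below_shift[OF less.prems(4)] by blast
    with \<open>z \<noteq> r\<close> show ?thesis
      unfolding p diff_op2_linear_factor[OF \<open>z \<noteq> r\<close>] by simp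
  qed
qed

lemma map_poly_cnj_pderiv: "map_poly cnj (pderiv p) = pderiv (map_poly cnj p)"
  by (rule poly_eqI) (simp add: coeff_map_poly coeff_pderiv)

lemma diff_op2_cnj:
  "diff_op2 a b c p z = cnj (diff_op2 (cnj a) (cnj b) (cnj c) (map_poly cnj p) (cnj z))"
  unfolding diff_op2_def by (simp flip: map_poly_cnj_pderiv)

lemma poly_add_legendre_op: "poly (p + legendre_op p) w = diff_op2 1 (2 * w) (w\<^sup>2 - 1) p w"
proof -
  have "pderiv [:-1, 0, 1:] = [:0, 2 :: complex:]"
    by (simp add: pderiv_pCons)
  then have L: "legendre_op p = [:0, 2:] * pderiv p + [:-1, 0, 1:] * pderiv (pderiv p)"
    unfolding legendre_op_def by (simp only: pderiv_mult add.commute mult.commute)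
  show ?thesis
    unfolding diff_op2_def poly_add L by (simp add: algebra_simps power2_eq_square)
qed

lemma quadratic_zero_free_below_legendre_symbol:
  assumes w: "0 < Im w"
  shows "quadratic_zero_free_below 1 (2 * w) (w\<^sup>2 - 1)"
  unfolding quadratic_zero_free_below_def
proof (intro allI impI notI)
  fix t assume t: "Im t \<le> 0" and "1 + 2 * w * t + (w\<^sup>2 - 1) * t\<^sup>2 = 0"
  then have "(1 + (w + 1) * t) * (1 + (w + (- 1)) * t) = 0"
    by algebra
  then obtain e :: complex where e: "e = 1 \<or> e = - 1" and "1 + (w + e) * t = 0"
    unfolding mult_eq_0_iff by blast
  moreover have "w + e \<noteq> 0" and "Im (1 / (w + e)) < 0"
    using w e by (auto simp: Im_one_div_neg_iff complex_eq_iff)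
  ultimately have "t = - (1 / (w + e))"
    by (simp add: field_simps) algebra
  with t \<open>Im (1 / (w + e)) < 0\<close> show False
    by simp
qed

lemma legendre_op_real_zeros:
  fixes p :: "complex poly"
  assumes "p \<noteq> 0" and real: "\<And>x. poly p x = 0 \<Longrightarrow> x \<in> \<real>"
    and w: "poly (p + legendre_op p) w = 0"
  shows "w \<in> \<real>"
proof (rule ccontr)
  assume "w \<notin> \<real>"
  then consider "0 < Im w" | "0 < Im (cnj w)"
    by (force simp: complex_is_Real_iff)
  then show False
  proof cases
    case 1
    with diff_op2_nonzero[OF assms(1) real 1 quadratic_zero_free_below_legendre_symbol[OF 1]]
    show False using w unfolding poly_add_legendre_op by simp
  next
    case 2
    have "map_poly cnj p \<noteq> 0"
      using assms(1) by (auto simp: poly_eq_iff coeff_map_poly)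
    moreover have "\<And>x. poly (map_poly cnj p) x = 0 \<Longrightarrow> x \<in> \<real>"
      using real by (force simp: complex_is_Real_iff)
    ultimately have "diff_op2 1 (2 * cnj w) ((cnj w)\<^sup>2 - 1) (map_poly cnj p) (cnj w) \<noteq> 0"
      using diff_op2_nonzero 2 quadratic_zero_free_below_legendre_symbol[OF 2] by blast
    moreover have "diff_op2 1 (2 * w) (w\<^sup>2 - 1) p w =
        cnj (diff_op2 1 (2 * cnj w) ((cnj w)\<^sup>2 - 1) (map_poly cnj p) (cnj w))"
      by (subst diff_op2_cnj) simp
    ultimately show False
      using w unfolding poly_add_legendre_op by simp
  qed
qed

theorem lemma4p7:
  shows "legendre_multiplier_seq (\<lambda>k. real k ^ 2 + real k + 1)"
  unfolding legendre_multiplier_seq_def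
proof (intro allI impI)
  fix n :: nat and a :: "nat \<Rightarrow> real"
  define p :: "complex poly" where "p = (\<Sum>k\<le>n. smult (of_real (a k)) (legendre_poly k))"
  have eval_p: "(\<Sum>k\<le>n. complex_of_real (a k) * legendre k z) = poly p z" for z
    unfolding p_def by (simp add: poly_sum legendre_eq_poly_legendre_poly)
  have "p + legendre_op p = (\<Sum>k\<le>n. smult (of_real (a k * (real k ^ 2 + real k + 1))) (legendre_poly k))"
    unfolding p_def legendre_op_legendre_expansion sum.distrib[symmetric] smult_add_left[symmetric]
    by (intro sum.cong refl) (simp add: algebra_simps power2_eq_square)
  then have eval_q: "(\<Sum>k\<le>n. complex_of_real (a k * (real k ^ 2 + real k + 1)) * legendre k z)
                  = poly (p + legendre_op p) z" for z
    by (simp add: poly_sum legendre_eq_poly_legendre_poly)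
  assume "only_real_zeros (\<lambda>z. \<Sum>k\<le>n. complex_of_real (a k) * legendre k z)"
  then have real: "\<And>x. poly p x = 0 \<Longrightarrow> x \<in> \<real>"
    unfolding only_real_zeros_def eval_p by blast
  have "p \<noteq> 0"
    using real[of \<i>] by (auto simp: complex_is_Real_iff)
  with real show "only_real_zeros (\<lambda>z. \<Sum>k\<le>n. complex_of_real (a k * (real k ^ 2 + real k + 1)) * legendre k z)"
    unfolding only_real_zeros_def eval_q using legendre_op_real_zeros by blast
qed

end
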